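(* Let $0<\alpha\le 1$. There exists $n_0(\alpha)$ such that the following holds for all integers $n\ge n_0(\alpha)$ and $m\in\mathbb{N}$ with $\alpha n\le m\le n/2$. Let $G$ be a digraph on $n$ vertices with $\delta^0(G)\ge \delta n$, where $0<\delta<1$. Then there exists a vertex subset $W\subseteq V(G)$ with $|W|=m$ such that \[ \frac{\delta^0(G[W])}{m}\ \ge\ \delta-2n^{-1/3}\quad\text{and}\quad \frac{\delta^0(G\setminus W)}{n-m}\ \ge\ \delta-2n^{-1/3}. \]
   Context: For a digraph $G$, $d^+(v)$ and $d^-(v)$ denote the out-degree and in-degree of a vertex $v$, and $\delta^0(G)=\min\{d^+(v),d^-(v):v\in V(G)\}$ is the minimum semi-degree. For $W\subseteq V(G)$, $G[W]$ is the subdigraph induced on $W$, and $G\setminus W$ denotes $G[V(G)\setminus W]$. *)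

theory Defs
  imports Complex_Main
begin

definition digraph :: "'a set \<Rightarrow> ('a \<times> 'a) set \<Rightarrow> bool" where
  "digraph V E \<longleftrightarrow> finite V \<and> E \<subseteq> V \<times> V \<and> (\<forall>v. (v, v) \<notin> E)"

definition out_deg :: "'a set \<Rightarrow> ('a \<times> 'a) set \<Rightarrow> 'a \<Rightarrow> nat" where
  "out_deg V E v = card {w \<in> V. (v, w) \<in> E}"

definition in_deg :: "'a set \<Rightarrow> ('a \<times> 'a) set \<Rightarrow> 'a \<Rightarrow> nat" where
  "in_deg V E v = card {w \<in> V. (w, v) \<in> E}"

text \<open>Minimum semi-degree of the digraph induced on V by E (for nonempty V).\<close>
definition min_semideg :: "'a set \<Rightarrow> ('a \<times> 'a) set \<Rightarrow> nat" where
  "min_semideg V E = Min ((out_deg V E ` V) \<union> (in_deg V E ` V))"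

definition induced_arcs :: "('a \<times> 'a) set \<Rightarrow> 'a set \<Rightarrow> ('a \<times> 'a) set" where
  "induced_arcs E W = E \<inter> (W \<times> W)"

end

(*
  Choose W0 at random, each vertex independently with probability p = m/n. By Hoeffding's
  inequality and a union bound over V and the 2n out- and in-neighbourhoods, with positive
  probability every one of these sets S satisfies | |S \<inter> W0| - p |S| | < t, where
  t = \<alpha> n^(2/3); in particular |W0| is within t of m. Adding or deleting fewer than t vertices
  turns W0 into a set W of size exactly m while changing each |S \<inter> W| by less than t. Hence
  every degree in G[W] and in G \ W is at least its proportional share of \<delta> n minus 2t, and
  2t \<le> 2 m n^(-1/3) \<le> 2 (n - m) n^(-1/3) because \<alpha> n \<le> m \<le> n/2.
*)
theory Submission
  imports Defs "HOL-Probability.Probability"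
begin

lemma prob_random_subset_deviation_ge:
  fixes V S :: "'a set" and p t :: real
  assumes "finite V" and "S \<subseteq> V" and p: "p \<in> {0..1}" and "t > 0"
  shows "measure_pmf.prob (Pi_pmf V False (\<lambda>_. bernoulli_pmf p))
           {f. t \<le> \<bar>real (card {x\<in>S. f x}) - real (card S) * p\<bar>}
         \<le> 2 * exp (-2 * t\<^sup>2 / real (card S))"
proof (cases "S = {}")
  case True
  then show ?thesis using \<open>t > 0\<close> by simp
next
  case False
  let ?M = "Pi_pmf V False (\<lambda>_. bernoulli_pmf p)"
  have "finite S" using assms finite_subset by blast
  have binomial: "map_pmf (\<lambda>f. card {x\<in>S. f x}) ?M = binomial_pmf (card S) p"
  proof -
    have "binomial_pmf (card S) p = map_pmf (\<lambda>f. card {x\<in>S. f x}) (Pi_pmf S False (\<lambda>_. bernoulli_pmf p))"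
      using \<open>finite S\<close> p by (rule binomial_pmf_altdef'[OF _ refl])
    also have "\<dots> = map_pmf (\<lambda>f. card {x\<in>S. f x}) (map_pmf (\<lambda>f x. if x \<in> S then f x else False) ?M)"
      using assms by (subst Pi_pmf_subset) auto
    also have "\<dots> = map_pmf (\<lambda>f. card {x\<in>S. f x}) ?M"
      by (simp add: pmf.map_comp o_def cong: conj_cong)
    finally show ?thesis by simp
  qed
  have "measure_pmf.prob ?M {f. t \<le> \<bar>real (card {x\<in>S. f x}) - real (card S) * p\<bar>}
      = measure_pmf.prob (binomial_pmf (card S) p) {k. \<bar>real k - real (card S) * p\<bar> \<ge> t}"
    by (simp flip: binomial add: vimage_def)
  also have "\<dots> \<le> 2 * exp (-2 * t\<^sup>2 / real (card S))"
    using assms False \<open>finite S\<close>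
    by (intro binomial_distribution.prob_abs_ge) (auto simp: binomial_distribution_def)
  finally show ?thesis .
qed

lemma obtain_subset_deviation_lt:
  fixes V :: "'a set" and F :: "'a set set" and p t :: real
  assumes "finite V" and "finite F" and F_sub: "\<And>S. S \<in> F \<Longrightarrow> S \<subseteq> V"
    and "p \<in> {0..1}" and "t > 0"
    and union_bound: "real (card F) * (2 * exp (-2 * t\<^sup>2 / real (card V))) < 1"
  obtains W where "W \<subseteq> V" and "\<And>S. S \<in> F \<Longrightarrow> \<bar>real (card (S \<inter> W)) - real (card S) * p\<bar> < t"
proof -
  let ?M = "Pi_pmf V False (\<lambda>_. bernoulli_pmf p)"
  let ?bad = "\<lambda>S. {f. t \<le> \<bar>real (card {x\<in>S. f x}) - real (card S) * p\<bar>}"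
  have bad_prob: "measure_pmf.prob ?M (?bad S) \<le> 2 * exp (-2 * t\<^sup>2 / real (card V))" if "S \<in> F" for S
  proof (cases "S = {}")
    case False
    have "card S \<le> card V" and "card S > 0"
      using F_sub[OF that] False \<open>finite V\<close> by (auto intro: card_mono simp: card_gt_0_iff finite_subset)
    then have "exp (-2 * t\<^sup>2 / real (card S)) \<le> exp (-2 * t\<^sup>2 / real (card V))"
      by (auto simp: divide_simps intro: mult_left_mono)
    with prob_random_subset_deviation_ge[OF \<open>finite V\<close> F_sub[OF that] \<open>p \<in> {0..1}\<close> \<open>t > 0\<close>]
    show ?thesis by linarith
  qed (use \<open>t > 0\<close> in simp)
  have "measure_pmf.prob ?M (\<Union>S\<in>F. ?bad S) \<le> (\<Sum>S\<in>F. measure_pmf.prob ?M (?bad S))"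
    using \<open>finite F\<close> by (intro measure_pmf.finite_measure_subadditive_finite) auto
  also have "\<dots> \<le> real (card F) * (2 * exp (-2 * t\<^sup>2 / real (card V)))"
    using sum_mono[OF bad_prob] by simp
  finally have "(\<Union>S\<in>F. ?bad S) \<noteq> UNIV"
    using union_bound by auto
  then obtain f where "f \<notin> (\<Union>S\<in>F. ?bad S)"
    by blast
  then have "\<bar>real (card {x\<in>S. f x}) - real (card S) * p\<bar> < t" if "S \<in> F" for S
    using that by (auto simp: not_le)
  moreover have "{x\<in>S. f x} = S \<inter> {x\<in>V. f x}" if "S \<in> F" for S
    using F_sub[OF that] by auto
  ultimately show ?thesis
    using that[of "{x\<in>V. f x}"] by auto
qed

lemma card_Int_diff_le_card_diff:
  assumes "A \<subseteq> B" and "finite B"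
  shows "\<bar>real (card (S \<inter> B)) - real (card (S \<inter> A))\<bar> \<le> real (card B) - real (card A)"
proof -
  have "finite A" using assms finite_subset by blast
  have "card (S \<inter> B) = card (S \<inter> A) + card (S \<inter> (B - A))"
    using assms \<open>finite A\<close> by (subst card_Un_disjoint[symmetric]) (auto intro: arg_cong[where f = card])
  moreover have "card (S \<inter> (B - A)) \<le> card B - card A"
    using assms by (metis card_Diff_subset card_mono finite_Diff inf_le2 \<open>finite A\<close>)
  moreover have "card A \<le> card B" using assms card_mono by blast
  ultimately show ?thesis by linarith
qed

lemma obtain_subset_card_near:
  assumes "finite V" and "W0 \<subseteq> V" and "m \<le> card V"
  obtains W where "W \<subseteq> V" and "card W = m"
    and "\<And>S. \<bar>real (card (S \<inter> W)) - real (card (S \<inter> W0))\<bar> \<le> \<bar>real (card W0) - real m\<bar>"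
proof (cases "m \<le> card W0")
  case True
  then obtain W where "W \<subseteq> W0" and "card W = m"
    by (metis obtain_subset_with_card_n)
  moreover have "\<bar>real (card (S \<inter> W)) - real (card (S \<inter> W0))\<bar> \<le> \<bar>real (card W0) - real m\<bar>" for S
    using card_Int_diff_le_card_diff[of W W0 S] assms \<open>W \<subseteq> W0\<close> \<open>card W = m\<close>
    by (simp add: finite_subset abs_minus_commute)
  ultimately show ?thesis
    using that assms by blast
next
  case False
  then obtain W where "W0 \<subseteq> W" "W \<subseteq> V" "card W = m"
    using exists_subset_between[of W0 m V] assms by auto
  with card_Int_diff_le_card_diff[of W0 W] assms show ?thesis
    using that[of W] False by (auto simp: finite_subset)
qed

lemma obtain_subset_card_eq_deviation_lt:
  fixes V :: "'a set" and F :: "'a set set" and m :: nat and t :: real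
  assumes "finite V" and "finite F" and F_sub: "\<And>S. S \<in> F \<Longrightarrow> S \<subseteq> V"
    and "m \<le> card V" and "t > 0"
    and union_bound: "(real (card F) + 1) * (2 * exp (-2 * t\<^sup>2 / real (card V))) < 1"
  obtains W where "W \<subseteq> V" and "card W = m"
    and "\<And>S. S \<in> F \<Longrightarrow> \<bar>real (card (S \<inter> W)) - real (card S) * (real m / real (card V))\<bar> < 2 * t"
proof -
  \<comment> \<open>V joins the family so that the random set also has about the right size.\<close>
  define p where "p = real m / real (card V)"
  have "p \<in> {0..1}" and Vp: "real (card V) * p = real m"
    by (cases "card V = 0") (use \<open>m \<le> card V\<close> in \<open>auto simp: p_def\<close>)
  have "real (card (insert V F)) \<le> real (card F) + 1"
    using \<open>finite F\<close> by (simp add: card_insert_if)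
  then have "real (card (insert V F)) * (2 * exp (-2 * t\<^sup>2 / real (card V)))
      \<le> (real (card F) + 1) * (2 * exp (-2 * t\<^sup>2 / real (card V)))"
    by (intro mult_right_mono) auto
  with union_bound have "real (card (insert V F)) * (2 * exp (-2 * t\<^sup>2 / real (card V))) < 1"
    by linarith
  with obtain_subset_deviation_lt[of V "insert V F" p t] assms \<open>p \<in> {0..1}\<close>
  obtain W0 where "W0 \<subseteq> V"
    and W0: "\<And>S. S \<in> insert V F \<Longrightarrow> \<bar>real (card (S \<inter> W0)) - real (card S) * p\<bar> < t"
    by blast
  have "\<bar>real (card W0) - real m\<bar> < t"
    using W0[of V] Vp \<open>W0 \<subseteq> V\<close> by (simp add: Int_absorb1)
  obtain W where "W \<subseteq> V" "card W = m"
    and near: "\<And>S. \<bar>real (card (S \<inter> W)) - real (card (S \<inter> W0))\<bar> \<le> \<bar>real (card W0) - real m\<bar>"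
    using obtain_subset_card_near[OF \<open>finite V\<close> \<open>W0 \<subseteq> V\<close> \<open>m \<le> card V\<close>] by blast
  show ?thesis
  proof (rule that[OF \<open>W \<subseteq> V\<close> \<open>card W = m\<close>])
    fix S assume "S \<in> F"
    then have "\<bar>real (card (S \<inter> W0)) - real (card S) * p\<bar> < t"
      using W0 by blast
    with near[of S] \<open>\<bar>real (card W0) - real m\<bar> < t\<close>
    show "\<bar>real (card (S \<inter> W)) - real (card S) * (real m / real (card V))\<bar> < 2 * t"
      unfolding p_def by arith
  qed
qed

lemma min_semideg_le_out_deg: "finite V \<Longrightarrow> v \<in> V \<Longrightarrow> min_semideg V E \<le> out_deg V E v"
  and min_semideg_le_in_deg: "finite V \<Longrightarrow> v \<in> V \<Longrightarrow> min_semideg V E \<le> in_deg V E v"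
  unfolding min_semideg_def by (auto intro: Min_le)

lemma le_min_semideg:
  assumes "finite V" and "V \<noteq> {}"
    and "\<And>v. v \<in> V \<Longrightarrow> b \<le> real (out_deg V E v)" and "\<And>v. v \<in> V \<Longrightarrow> b \<le> real (in_deg V E v)"
  shows "b \<le> real (min_semideg V E)"
proof -
  have "min_semideg V E \<in> out_deg V E ` V \<union> in_deg V E ` V"
    unfolding min_semideg_def using assms by (intro Min_in) auto
  with assms show ?thesis by auto
qed

lemma min_semideg_induced_arcs: "min_semideg V (induced_arcs E V) = min_semideg V E"
proof -
  have "out_deg V (induced_arcs E V) v = out_deg V E v" and "in_deg V (induced_arcs E V) v = in_deg V E v"
    if "v \<in> V" for v
    using that unfolding out_deg_def in_deg_def induced_arcs_def by (auto intro: arg_cong[where f = card])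
  then show ?thesis
    unfolding min_semideg_def by (metis (no_types, lifting) image_cong)
qed

lemma out_deg_eq_card_Int: "U \<subseteq> V \<Longrightarrow> out_deg U E v = card ({w\<in>V. (v, w) \<in> E} \<inter> U)"
  and in_deg_eq_card_Int: "U \<subseteq> V \<Longrightarrow> in_deg U E v = card ({w\<in>V. (w, v) \<in> E} \<inter> U)"
  unfolding out_deg_def in_deg_def by (auto intro: arg_cong[where f = card])

lemma min_semideg_subset_ge:
  assumes "finite V" and "U \<subseteq> V" and "U \<noteq> {}" and "q \<ge> 0"
    and out: "\<And>v. v \<in> U \<Longrightarrow> real (out_deg V E v) * q - s \<le> real (out_deg U E v)"
    and in_: "\<And>v. v \<in> U \<Longrightarrow> real (in_deg V E v) * q - s \<le> real (in_deg U E v)"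
  shows "real (min_semideg V E) * q - s \<le> real (min_semideg U E)"
proof (rule le_min_semideg)
  show "finite U" using assms finite_subset by blast
  fix v assume "v \<in> U"
  then have "v \<in> V" using assms by blast
  have "real (min_semideg V E) * q \<le> real (out_deg V E v) * q"
    using min_semideg_le_out_deg[OF \<open>finite V\<close> \<open>v \<in> V\<close>] \<open>q \<ge> 0\<close> by (intro mult_right_mono) auto
  with out[OF \<open>v \<in> U\<close>] show "real (min_semideg V E) * q - s \<le> real (out_deg U E v)"
    by linarith
  have "real (min_semideg V E) * q \<le> real (in_deg V E v) * q"
    using min_semideg_le_in_deg[OF \<open>finite V\<close> \<open>v \<in> V\<close>] \<open>q \<ge> 0\<close> by (intro mult_right_mono) auto
  with in_[OF \<open>v \<in> U\<close>] show "real (min_semideg V E) * q - s \<le> real (in_deg U E v)"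
    by linarith
qed fact

lemma obtain_split_min_semideg:
  fixes V :: "'a set" and E :: "('a \<times> 'a) set" and m :: nat and t :: real
  assumes "finite V" and "0 < m" and "m < card V" and "t > 0"
    and union_bound: "(2 * real (card V) + 1) * (2 * exp (-2 * t\<^sup>2 / real (card V))) < 1"
  obtains W where "W \<subseteq> V" and "card W = m"
    and "real (min_semideg V E) * (real m / real (card V)) - 2 * t
           \<le> real (min_semideg W (induced_arcs E W))"
    and "real (min_semideg V E) * (real (card V - m) / real (card V)) - 2 * t
           \<le> real (min_semideg (V - W) (induced_arcs E (V - W)))"
proof -
  define Nout where "Nout v = {w\<in>V. (v, w) \<in> E}" for v
  define Nin where "Nin v = {w\<in>V. (w, v) \<in> E}" for v
  define N where "N = Nout ` V \<union> Nin ` V"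
  have "finite N" and N_sub: "\<And>S. S \<in> N \<Longrightarrow> S \<subseteq> V"
    using \<open>finite V\<close> by (auto simp: N_def Nout_def Nin_def)
  have "card N \<le> 2 * card V"
    unfolding N_def using card_Un_le[of "Nout ` V" "Nin ` V"] card_image_le[OF \<open>finite V\<close>, of Nout]
      card_image_le[OF \<open>finite V\<close>, of Nin] by linarith
  then have "(real (card N) + 1) * (2 * exp (-2 * t\<^sup>2 / real (card V)))
      \<le> (2 * real (card V) + 1) * (2 * exp (-2 * t\<^sup>2 / real (card V)))"
    by (intro mult_right_mono) auto
  with union_bound have "(real (card N) + 1) * (2 * exp (-2 * t\<^sup>2 / real (card V))) < 1"
    by linarith
  with obtain_subset_card_eq_deviation_lt[OF \<open>finite V\<close> \<open>finite N\<close> N_sub, of m t] assms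
  obtain W where "W \<subseteq> V" and "card W = m"
    and dev_W: "\<And>S. S \<in> N \<Longrightarrow> \<bar>real (card (S \<inter> W)) - real (card S) * (real m / real (card V))\<bar> < 2 * t"
    by auto
  have split_bound: "real (min_semideg V E) * q - 2 * t \<le> real (min_semideg U (induced_arcs E U))"
    if "U \<subseteq> V" "U \<noteq> {}" "q \<ge> 0"
      and dev: "\<And>S. S \<in> N \<Longrightarrow> \<bar>real (card (S \<inter> U)) - real (card S) * q\<bar> < 2 * t" for U q
    unfolding min_semideg_induced_arcs
  proof (rule min_semideg_subset_ge[OF \<open>finite V\<close> that(1-3)])
    fix v assume "v \<in> U"
    then have "Nout v \<in> N" "Nin v \<in> N" using that by (auto simp: N_def)
    then have "\<bar>real (card (Nout v \<inter> U)) - real (card (Nout v)) * q\<bar> < 2 * t"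
      and "\<bar>real (card (Nin v \<inter> U)) - real (card (Nin v)) * q\<bar> < 2 * t"
      using dev by blast+
    moreover have "out_deg V E v = card (Nout v)" "out_deg U E v = card (Nout v \<inter> U)"
      and "in_deg V E v = card (Nin v)" "in_deg U E v = card (Nin v \<inter> U)"
      using out_deg_eq_card_Int[OF that(1)] in_deg_eq_card_Int[OF that(1)]
      by (simp_all add: Nout_def Nin_def out_deg_def in_deg_def)
    ultimately show "real (out_deg V E v) * q - 2 * t \<le> real (out_deg U E v)"
      and "real (in_deg V E v) * q - 2 * t \<le> real (in_deg U E v)"
      by (simp_all add: abs_less_iff)
  qed
  have dev_VW: "\<bar>real (card (S \<inter> (V - W))) - real (card S) * (real (card V - m) / real (card V))\<bar> < 2 * t"
    if "S \<in> N" for S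
  proof -
    have "finite S" using N_sub[OF that] \<open>finite V\<close> finite_subset by blast
    have "S \<inter> (V - W) = S - S \<inter> W" using N_sub[OF that] by blast
    then have "real (card (S \<inter> (V - W))) = real (card S) - real (card (S \<inter> W))"
      using \<open>finite S\<close> by (simp add: card_Diff_subset card_mono of_nat_diff)
    moreover have "real (card S) * (real (card V - m) / real (card V))
                 = real (card S) - real (card S) * (real m / real (card V))"
      using \<open>m < card V\<close> by (simp add: of_nat_diff field_simps)
    ultimately show ?thesis using dev_W[OF that] by (simp add: abs_minus_commute)
  qed
  have "W \<noteq> {}" and "V - W \<noteq> {}"
    using \<open>card W = m\<close> \<open>0 < m\<close> \<open>m < card V\<close> \<open>W \<subseteq> V\<close> by auto
  show ?thesis
  proof (rule that[OF \<open>W \<subseteq> V\<close> \<open>card W = m\<close>])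
    show "real (min_semideg V E) * (real m / real (card V)) - 2 * t
           \<le> real (min_semideg W (induced_arcs E W))"
      using \<open>W \<subseteq> V\<close> \<open>W \<noteq> {}\<close> dev_W by (intro split_bound) auto
    show "real (min_semideg V E) * (real (card V - m) / real (card V)) - 2 * t
           \<le> real (min_semideg (V - W) (induced_arcs E (V - W)))"
      using \<open>V - W \<noteq> {}\<close> dev_VW by (intro split_bound) auto
  qed
qed

lemma cubic_mul_exp_neg_lt_1:
  fixes a x :: real
  assumes "a > 0" and "x \<ge> 1" and "x \<ge> 96 / a ^ 8"
  shows "(4 * x ^ 3 + 2) * exp (-2 * a\<^sup>2 * x) < 1"
proof -
  have y: "a\<^sup>2 * x / 2 > 0" using assms by simp
  have "4 * x ^ 3 + 2 \<le> 96 * x ^ 3 / 16" using assms one_le_power[OF \<open>x \<ge> 1\<close>, of 3] by simp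
  also have "\<dots> \<le> a ^ 8 * x * x ^ 3 / 16"
  proof -
    have "96 \<le> a ^ 8 * x" using assms by (simp add: field_simps)
    then show ?thesis using assms by (intro divide_right_mono mult_right_mono) auto
  qed
  also have "\<dots> = (a\<^sup>2 * x / 2) ^ 4"
    by (simp add: power_mult_distrib power_divide flip: power_mult power_Suc)
  also have "\<dots> < (1 + a\<^sup>2 * x / 2) ^ 4"
    using y by (intro power_strict_mono) auto
  also have "\<dots> \<le> exp (a\<^sup>2 * x / 2) ^ 4"
    using y by (intro power_mono exp_ge_add_one_self) auto
  also have "\<dots> = exp (2 * a\<^sup>2 * x)"
    by (simp flip: exp_of_nat_mult)
  finally have "(4 * x ^ 3 + 2) * exp (-2 * a\<^sup>2 * x) < exp (2 * a\<^sup>2 * x) * exp (-2 * a\<^sup>2 * x)"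
    by (intro mult_strict_right_mono) auto
  then show ?thesis
    by (simp flip: exp_add)
qed

lemma union_bound_for_cube_root_deviation:
  fixes \<alpha> :: real and n :: nat
  assumes "\<alpha> > 0" and "(1 + 96 / \<alpha> ^ 8) ^ 3 \<le> real n"
  shows "(2 * real n + 1) * (2 * exp (-2 * (\<alpha> * real n powr (2/3))\<^sup>2 / real n)) < 1"
proof -
  define x where "x = real n powr (1/3)"
  have "1 \<le> 1 + 96 / \<alpha> ^ 8" using assms by simp
  then have "1 \<le> real n" using assms(2) one_le_power[of "1 + 96 / \<alpha> ^ 8" 3] by linarith
  then have "x > 0" and x3: "x ^ 3 = real n"
    by (simp_all add: x_def powr_powr flip: powr_realpow)
  with assms(2) have "1 + 96 / \<alpha> ^ 8 \<le> x"
    by (metis power_le_imp_le_base less_eq_real_def numeral_3_eq_3)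
  then have "(4 * x ^ 3 + 2) * exp (-2 * \<alpha>\<^sup>2 * x) < 1"
    using \<open>\<alpha> > 0\<close> \<open>1 \<le> 1 + 96 / \<alpha> ^ 8\<close> by (intro cubic_mul_exp_neg_lt_1) linarith+
  moreover have "-2 * (\<alpha> * real n powr (2/3))\<^sup>2 / real n = -2 * \<alpha>\<^sup>2 * x"
    using powr_add[of "real n" 1 "1/3"] \<open>1 \<le> real n\<close> by (simp add: x_def power_mult_distrib powr_powr flip: powr_realpow)
  ultimately show ?thesis
    using x3 by (simp add: algebra_simps)
qed

lemma cube_root_deviation_le:
  fixes \<alpha> k :: real and n :: nat
  assumes "0 < n" and "\<alpha> * real n \<le> k"
  shows "\<alpha> * real n powr (2/3) \<le> k * real n powr (-1/3)"
proof -
  have "real n powr (2/3) = real n * real n powr (-1/3)"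
    using powr_add[of "real n" 1 "-1/3"] \<open>0 < n\<close> by simp
  with assms show ?thesis
    by (simp add: mult_right_mono flip: mult.assoc)
qed

lemma le_divide_of_proportional_bound:
  fixes k n \<delta> D X t e :: real
  assumes "0 < k" and "0 < n" and "\<delta> * n \<le> D"
    and "D * (k / n) - 2 * t \<le> X" and "t \<le> k * e"
  shows "\<delta> - 2 * e \<le> X / k"
proof -
  have "\<delta> * k \<le> D * (k / n)"
    using assms mult_right_mono[OF \<open>\<delta> * n \<le> D\<close>, of "k / n"] by simp
  then have "(\<delta> - 2 * e) * k \<le> X"
    using assms by (simp add: algebra_simps)
  then show ?thesis
    using \<open>0 < k\<close> by (simp add: pos_le_divide_eq)
qed

lemma exists_split_min_semideg_ratio:
  fixes V :: "'a set" and E :: "('a \<times> 'a) set" and m :: nat and t \<delta> e :: real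
  assumes "finite V" and "0 < m" and "m < card V" and "t > 0"
    and "(2 * real (card V) + 1) * (2 * exp (-2 * t\<^sup>2 / real (card V))) < 1"
    and "\<delta> * real (card V) \<le> real (min_semideg V E)"
    and "t \<le> real m * e" and "t \<le> real (card V - m) * e"
  shows "\<exists>W \<subseteq> V. card W = m \<and>
           \<delta> - 2 * e \<le> real (min_semideg W (induced_arcs E W)) / real m \<and>
           \<delta> - 2 * e \<le> real (min_semideg (V - W) (induced_arcs E (V - W))) / real (card V - m)"
proof -
  obtain W where "W \<subseteq> V" and "card W = m"
    and "real (min_semideg V E) * (real m / real (card V)) - 2 * t
           \<le> real (min_semideg W (induced_arcs E W))"
    and "real (min_semideg V E) * (real (card V - m) / real (card V)) - 2 * t
           \<le> real (min_semideg (V - W) (induced_arcs E (V - W)))"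
    using obtain_split_min_semideg[OF assms(1-5)] by blast
  moreover have "0 < real m" and "0 < real (card V)" and "0 < real (card V - m)"
    using \<open>0 < m\<close> \<open>m < card V\<close> by simp_all
  ultimately show ?thesis
    using le_divide_of_proportional_bound assms(6-8) by blast
qed

theorem proposition2p3:
  fixes \<alpha> :: real
  assumes "0 < \<alpha>" and "\<alpha> \<le> 1"
  shows "\<exists>n0::nat. \<forall>n m :: nat. n \<ge> n0 \<longrightarrow> \<alpha> * real n \<le> real m \<longrightarrow> real m \<le> real n / 2 \<longrightarrow>
    (\<forall>(V :: nat set) E (\<delta> :: real).
       digraph V E \<longrightarrow> card V = n \<longrightarrow> 0 < \<delta> \<longrightarrow> \<delta> < 1 \<longrightarrow>
       real (min_semideg V E) \<ge> \<delta> * real n \<longrightarrow>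
       (\<exists>W \<subseteq> V. card W = m \<and>
          real (min_semideg W (induced_arcs E W)) / real m \<ge> \<delta> - 2 * real n powr (-1/3) \<and>
          real (min_semideg (V - W) (induced_arcs E (V - W))) / real (n - m)
             \<ge> \<delta> - 2 * real n powr (-1/3)))"
proof (intro exI[of _ "nat \<lceil>(1 + 96 / \<alpha> ^ 8) ^ 3\<rceil> + 1"] allI impI)
  fix n m :: nat and V :: "nat set" and E and \<delta> :: real
  assume "nat \<lceil>(1 + 96 / \<alpha> ^ 8) ^ 3\<rceil> + 1 \<le> n" and "\<alpha> * real n \<le> real m" and "real m \<le> real n / 2"
    and "digraph V E" and "card V = n" and "\<delta> * real n \<le> real (min_semideg V E)"
  then have "(1 + 96 / \<alpha> ^ 8) ^ 3 \<le> real n" and "0 < n" and "finite V"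
    by (linarith, linarith, simp add: digraph_def)
  moreover have "0 < \<alpha> * real n"
    using \<open>0 < \<alpha>\<close> \<open>0 < n\<close> by simp
  ultimately have "0 < m" and "m < n" and "m \<le> n - m"
    using \<open>\<alpha> * real n \<le> real m\<close> \<open>real m \<le> real n / 2\<close> by linarith+
  define t where "t = \<alpha> * real n powr (2/3)"
  have t_le_m: "t \<le> real m * real n powr (-1/3)"
    and t_le_n_minus_m: "t \<le> real (n - m) * real n powr (-1/3)"
    using cube_root_deviation_le[OF \<open>0 < n\<close>] \<open>\<alpha> * real n \<le> real m\<close> \<open>m \<le> n - m\<close>
    by (auto simp: t_def)
  have "0 < t" and union_bound: "(2 * real n + 1) * (2 * exp (-2 * t\<^sup>2 / real n)) < 1"
    using union_bound_for_cube_root_deviation[OF \<open>0 < \<alpha>\<close>] \<open>(1 + 96 / \<alpha> ^ 8) ^ 3 \<le> real n\<close>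
      \<open>0 < \<alpha>\<close> \<open>0 < n\<close> by (simp_all add: t_def)
  show "\<exists>W \<subseteq> V. card W = m \<and>
          real (min_semideg W (induced_arcs E W)) / real m \<ge> \<delta> - 2 * real n powr (-1/3) \<and>
          real (min_semideg (V - W) (induced_arcs E (V - W))) / real (n - m)
             \<ge> \<delta> - 2 * real n powr (-1/3)"
    using exists_split_min_semideg_ratio[OF \<open>finite V\<close> \<open>0 < m\<close>, unfolded \<open>card V = n\<close>,
        OF \<open>m < n\<close> \<open>0 < t\<close> union_bound \<open>\<delta> * real n \<le> real (min_semideg V E)\<close> t_le_m t_le_n_minus_m] .
qed

end
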